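(* Let $G=(V,D)$ be a directed graph whose model has dimension $|D|+1$, and let $J=J(\psi_G)$. Suppose $G$ is not complete. Let $i\in V$, and let $S$ be any set of $|D|+1$ columns of $J$ containing no column $K_{ij}$ with $j\in V$ (including $K_{ii}$). Then $\mathrm{rank}(J_S)\le|D|-|\mathrm{ch}(i)|+1$.
   Context: A directed graph $G=(V,D)$ has edge set $D\subseteq V\times V$ of ordered pairs $(i,j)$, $i\neq j$. It is complete if every pair of distinct nodes is adjacent. $\mathrm{ch}(i)$ is the set of children of $i$. $\Lambda$ is the $V\times V$ matrix with indeterminate entries $\lambda_{ij}$ for $(i,j)\in D$ and zeros elsewhere, and $s$ is a further indeterminate. Let $\psi_G(\Lambda,s)=s(I-\Lambda)(I-\Lambda)^T=K$. The model of $G$ is the image of $\psi_G$ over real $\Lambda$ with $I-\Lambda$ invertible and $s>0$; its dimension is that of its Zariski closure, equivalently the generic rank of the Jacobian. The transposed Jacobian $J(\psi_G)$ has rows indexed by $\{\lambda_{kl}:(k,l)\in D\}\cup\{s\}$ and columns indexed by $K_{ij}$ (with $K_{ij}=K_{ji}$), with entries $\partial K_{ij}/\partial\theta$. $J_S$ is the submatrix on the columns in $S$, and rank means rank over $\mathbb{R}(\lambda,s)$. *)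

theory Defs
  imports "HOL-Analysis.Analysis" "HOL-Library.Function_Algebras"
begin

text \<open>Parameters of the map psi_G: the edge weights lambda_kl and the scalar s.\<close>
datatype 'v param = Lam 'v 'v | Sc

definition Lmat :: "('v \<times> 'v) set \<Rightarrow> ('v param \<Rightarrow> real) \<Rightarrow> 'v \<Rightarrow> 'v \<Rightarrow> real" where
  "Lmat D th i j = (if (i, j) \<in> D then th (Lam i j) else 0)"

text \<open>K = s (I - Lambda)(I - Lambda)^T, entry (i,j).\<close>
definition Kent :: "'v set \<Rightarrow> ('v \<times> 'v) set \<Rightarrow> ('v param \<Rightarrow> real) \<Rightarrow> 'v \<Rightarrow> 'v \<Rightarrow> real" where
  "Kent V D th i j = th Sc * (\<Sum>k\<in>V. ((if i = k then 1 else 0) - Lmat D th i k) *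
                                    ((if j = k then 1 else 0) - Lmat D th j k))"

text \<open>Columns are indexed by unordered pairs {i,j} (K_ij = K_ji), including {i} = {i,i}.\<close>
definition cols :: "'v set \<Rightarrow> 'v set set" where
  "cols V = {{i, j} | i j. i \<in> V \<and> j \<in> V}"

definition Kcol :: "'v set \<Rightarrow> ('v \<times> 'v) set \<Rightarrow> ('v param \<Rightarrow> real) \<Rightarrow> 'v set \<Rightarrow> real" where
  "Kcol V D th c = (let p = (SOME p. c = {fst p, snd p}) in Kent V D th (fst p) (snd p))"

definition rows :: "('v \<times> 'v) set \<Rightarrow> 'v param set" where
  "rows D = {Lam k l | k l. (k, l) \<in> D} \<union> {Sc}"

text \<open>Transposed Jacobian J(psi_G) evaluated at parameter point th:
  entry (p, c) is the partial derivative of K_c with respect to parameter p.\<close>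
definition Jac :: "'v set \<Rightarrow> ('v \<times> 'v) set \<Rightarrow> ('v param \<Rightarrow> real) \<Rightarrow> 'v param \<Rightarrow> 'v set \<Rightarrow> real" where
  "Jac V D th p c = (if p \<in> rows D then deriv (\<lambda>t. Kcol V D (th(p := t)) c) (th p) else 0)"

definition colvec :: "'v set \<Rightarrow> ('v \<times> 'v) set \<Rightarrow> ('v param \<Rightarrow> real) \<Rightarrow> 'v set \<Rightarrow> ('v param \<Rightarrow> real)" where
  "colvec V D th c = (\<lambda>p. Jac V D th p c)"

definition rank_at :: "'v set \<Rightarrow> ('v \<times> 'v) set \<Rightarrow> 'v set set \<Rightarrow> ('v param \<Rightarrow> real) \<Rightarrow> nat" where
  "rank_at V D S th = vector_space.dim (\<lambda>(a::real) f. (\<lambda>x. a * f x)) (colvec V D th ` S)"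

text \<open>Rank of J_S over R(lambda, s): the generic rank, i.e. the maximal rank of its
  real specialisations (R is infinite, so these agree).\<close>
definition generic_rank :: "'v set \<Rightarrow> ('v \<times> 'v) set \<Rightarrow> 'v set set \<Rightarrow> nat" where
  "generic_rank V D S = Max (range (rank_at V D S))"

definition digraph :: "'v set \<Rightarrow> ('v \<times> 'v) set \<Rightarrow> bool" where
  "digraph V D \<longleftrightarrow> finite V \<and> D \<subseteq> V \<times> V \<and> (\<forall>i. (i, i) \<notin> D)"

definition complete_digraph :: "'v set \<Rightarrow> ('v \<times> 'v) set \<Rightarrow> bool" where
  "complete_digraph V D \<longleftrightarrow> (\<forall>i\<in>V. \<forall>j\<in>V. i \<noteq> j \<longrightarrow> (i, j) \<in> D \<or> (j, i) \<in> D)"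

definition ch :: "('v \<times> 'v) set \<Rightarrow> 'v \<Rightarrow> 'v set" where
  "ch D i = {j. (i, j) \<in> D}"

definition model_dim :: "'v set \<Rightarrow> ('v \<times> 'v) set \<Rightarrow> nat" where
  "model_dim V D = generic_rank V D (cols V)"

end

theory Submission
  imports Defs
begin

text \<open>A column K_c with i \<notin> c is built only from rows of I - \<Lambda> other than row i,
  so it does not involve the parameters \<lambda>_il. Hence every row \<lambda>_il with l \<in> ch(i) of J_S
  vanishes, and J_S has at most |D| + 1 - |ch(i)| nonzero rows, which bounds its rank at
  every parameter point and therefore its generic rank.\<close>

lemma vector_space_pointwise_scale:
  "vector_space (\<lambda>(a::real) (f::'a \<Rightarrow> real) x. a * f x)"
  by unfold_locales (auto simp: fun_eq_iff algebra_simps)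

lemma sum_fun_apply: "(\<Sum>p\<in>A. (g p :: 'a \<Rightarrow> 'b::comm_monoid_add)) x = (\<Sum>p\<in>A. g p x)"
  by (induction A rule: infinite_finite_induct) auto

lemma dim_vanishing_outside_le_card:
  fixes R :: "'a set" and W :: "('a \<Rightarrow> real) set"
  assumes "finite R" and vanish: "\<And>f x. f \<in> W \<Longrightarrow> x \<notin> R \<Longrightarrow> f x = 0"
  shows "vector_space.dim (\<lambda>(a::real) f x. a * f x) W \<le> card R"
proof -
  interpret v: vector_space "\<lambda>(a::real) (f::'a \<Rightarrow> real) x. a * f x"
    by (rule vector_space_pointwise_scale)
  define e where "e p = (\<lambda>x. if x = p then 1 else 0 :: real)" for p :: 'a
  have "W \<subseteq> v.span (e ` R)"
  proof
    fix f assume "f \<in> W"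
    then have "f = (\<Sum>p\<in>R. (\<lambda>x. f p * e p x))"
      using vanish \<open>finite R\<close> by (auto simp: fun_eq_iff sum_fun_apply e_def if_distrib cong: if_cong)
    also have "\<dots> \<in> v.span (e ` R)"
      by (intro v.span_sum v.span_scale v.span_base) auto
    finally show "f \<in> v.span (e ` R)" .
  qed
  then have "v.dim W \<le> card (e ` R)"
    using v.dim_le_card \<open>finite R\<close> by blast
  also have "\<dots> \<le> card R"
    using \<open>finite R\<close> by (rule card_image_le)
  finally show ?thesis .
qed

lemma Kent_fun_upd_Lam_other_row:
  assumes "a \<noteq> i" "b \<noteq> i"
  shows "Kent V D (th(Lam i l := t)) a b = Kent V D th a b"
proof -
  have "(th(Lam i l := t)) (Lam a k) = th (Lam a k)"
       "(th(Lam i l := t)) (Lam b k) = th (Lam b k)"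
       "(th(Lam i l := t)) Sc = th Sc" for k
    using assms by auto
  then show ?thesis
    unfolding Kent_def Lmat_def by (simp only:)
qed

lemma Kcol_fun_upd_Lam_other_row:
  assumes "c \<in> cols V" "i \<notin> c"
  shows "Kcol V D (th(Lam i l := t)) c = Kcol V D th c"
proof -
  define p where "p = (SOME p. c = {fst p, snd p})"
  have "\<exists>p. c = {fst p, snd p}"
    using assms(1) unfolding cols_def by force
  then have "c = {fst p, snd p}"
    unfolding p_def by (rule someI_ex)
  then have "fst p \<noteq> i" "snd p \<noteq> i"
    using assms(2) by auto
  then show ?thesis
    unfolding Kcol_def Let_def p_def[symmetric] by (rule Kent_fun_upd_Lam_other_row)
qed

lemma Jac_Lam_other_row_eq_0:
  assumes "c \<in> cols V" "i \<notin> c"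
  shows "Jac V D th (Lam i l) c = 0"
proof -
  have "(\<lambda>t. Kcol V D (th(Lam i l := t)) c) = (\<lambda>t. Kcol V D th c)"
    using assms by (simp add: Kcol_fun_upd_Lam_other_row)
  then show ?thesis
    unfolding Jac_def by (simp add: DERIV_imp_deriv[OF DERIV_const])
qed

lemma Jac_outside_rows_eq_0: "p \<notin> rows D \<Longrightarrow> Jac V D th p c = 0"
  unfolding Jac_def by simp

lemma rows_eq_insert_image: "rows D = insert Sc ((\<lambda>(k, l). Lam k l) ` D)"
  unfolding rows_def by auto

lemma finite_rows: "finite D \<Longrightarrow> finite (rows D)"
  by (simp add: rows_eq_insert_image)

lemma card_rows:
  assumes "finite D"
  shows "card (rows D) = card D + 1"
proof -
  have "inj_on (\<lambda>(k, l). Lam k l) D"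
    by (auto simp: inj_on_def)
  moreover have "Sc \<notin> (\<lambda>(k, l). Lam k l) ` D"
    by auto
  ultimately show ?thesis
    using assms by (simp add: rows_eq_insert_image card_image)
qed

lemma card_rows_Diff_children:
  assumes "finite D"
  shows "card (rows D - Lam i ` ch D i) = card D + 1 - card (ch D i)"
proof -
  have "Lam i ` ch D i \<subseteq> rows D"
    unfolding rows_def ch_def by auto
  moreover have "card (Lam i ` ch D i) = card (ch D i)"
    by (rule card_image) (auto simp: inj_on_def)
  moreover have "finite (Lam i ` ch D i)"
    using calculation(1) finite_rows[OF assms] by (rule finite_subset)
  ultimately show ?thesis
    by (simp add: card_Diff_subset card_rows[OF assms])
qed

lemma card_ch_le_card:
  assumes "finite D"
  shows "card (ch D i) \<le> card D"
proof -
  have "ch D i = snd ` (D \<inter> {i} \<times> UNIV)"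
    unfolding ch_def by force
  also have "card \<dots> \<le> card (D \<inter> {i} \<times> UNIV)"
    using assms by (intro card_image_le) simp
  also have "\<dots> \<le> card D"
    using assms by (intro card_mono) auto
  finally show ?thesis .
qed

lemma rank_at_avoiding_vertex_le:
  assumes "finite D" "S \<subseteq> cols V" "\<forall>c\<in>S. i \<notin> c"
  shows "rank_at V D S th \<le> card D + 1 - card (ch D i)"
proof -
  have "finite (rows D - Lam i ` ch D i)"
    using finite_rows[OF assms(1)] by simp
  moreover have "f p = 0"
    if f: "f \<in> colvec V D th ` S" and p: "p \<notin> rows D - Lam i ` ch D i" for f p
  proof -
    obtain c where c: "c \<in> S" "f = colvec V D th c"
      using f by blast
    then have "c \<in> cols V" "i \<notin> c"
      using assms(2,3) by auto
    with c p show ?thesis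
      unfolding colvec_def by (auto simp: Jac_outside_rows_eq_0 Jac_Lam_other_row_eq_0)
  qed
  ultimately show ?thesis
    unfolding rank_at_def card_rows_Diff_children[OF assms(1), symmetric]
    by (rule dim_vanishing_outside_le_card)
qed

lemma generic_rank_le:
  assumes "\<And>th. rank_at V D S th \<le> n"
  shows "generic_rank V D S \<le> n"
proof -
  have "range (rank_at V D S) \<subseteq> {..n}"
    using assms by auto
  then have "finite (range (rank_at V D S))"
    by (rule finite_subset) simp
  then show ?thesis
    unfolding generic_rank_def by (rule Max.boundedI) (auto intro: assms)
qed

theorem lemma4p1:
  fixes V :: "'v set" and D :: "('v \<times> 'v) set" and i :: 'v and S :: "'v set set"
  assumes "digraph V D"
    and "model_dim V D = card D + 1"
    and "\<not> complete_digraph V D"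
    and "i \<in> V"
    and "S \<subseteq> cols V"
    and "card S = card D + 1"
    and "\<forall>c\<in>S. i \<notin> c"
  shows "int (generic_rank V D S) \<le> int (card D) - int (card (ch D i)) + 1"
proof -
  have "finite D"
    using assms(1) unfolding digraph_def by (meson finite_SigmaI finite_subset)
  then have "generic_rank V D S \<le> card D + 1 - card (ch D i)"
    using assms(5,7) by (intro generic_rank_le rank_at_avoiding_vertex_le)
  then show ?thesis
    using card_ch_le_card[OF \<open>finite D\<close>, of i] by linarith
qed

end
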